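(* Let $p>1$ and $\alpha,\beta>0$, and consider the operators $\mathcal{C}_\alpha$ and $\mathcal{C}_\beta^*$ on $L^p(\mathbb{R}^+)$. Then $\mathcal{C}_\alpha\mathcal{C}_\beta^*=\mathcal{C}_\beta^*\mathcal{C}_\alpha$, and for $f\in L^p(\mathbb{R}^+)$ and almost every $t>0$, $$(\mathcal{C}_\alpha\mathcal{C}_\beta^* )f(t)=\alpha\int_0^t f(r)\frac{1}{t-r}\Big(\frac{t-r}{t}\Big)^{\alpha+\beta}{}_2F_1\Big(\alpha+\beta,\beta;\beta+1;\frac rt\Big)dr+\beta\int_t^\infty f(r)\frac{1}{r-t}\Big(\frac{r-t}{r}\Big)^{\alpha+\beta}{}_2F_1\Big(\alpha+\beta,\alpha;\alpha+1;\frac tr\Big)dr.$$ In particular, for $f\in L^p(\mathbb{R}^+)$ and almost every $t>0$, $$(\mathcal{C}_1\mathcal{C}_\beta^* )f(t)=\mathcal{C}_1f(t)+\beta\int_t^\infty f(r)\frac{(r-t)^\beta}{r^{\beta+1}}\,{}_2F_1\Big(\beta+1,1;2;\frac tr\Big)dr,$$ $$(\mathcal{C}_\alpha\mathcal{C}_1^* )f(t)=\alpha\int_0^t f(r)\frac{(t-r)^\alpha}{t^{\alpha+1}}\,{}_2F_1\Big(\alpha+1,1;2;\frac rt\Big)dr+\mathcal{C}_1^*f(t),$$ and $\mathcal{C}_1\mathcal{C}_1^*f=\mathcal{C}_1f+\mathcal{C}_1^*f=\mathcal{C}_1^*\mathcal{C}_1f$.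
   Context: For $\gamma>0$ the generalized Cesàro operators on $L^p(\mathbb{R}^+)$ are $\mathcal{C}_\gamma f(t)=\frac{\gamma}{t^\gamma}\int_0^t(t-s)^{\gamma-1}f(s)\,ds$ and $\mathcal{C}_\gamma^*f(t)=\gamma\int_t^\infty\frac{(s-t)^{\gamma-1}}{s^\gamma}f(s)\,ds$ for $t>0$; they are bounded on $L^p(\mathbb{R}^+)$ for $p>1$. ${}_2F_1$ is the Gaussian hypergeometric function ${}_2F_1(a,b;c;z)=\frac{\Gamma(c)}{\Gamma(a)\Gamma(b)}\sum_{n\ge0}\frac{\Gamma(a+n)\Gamma(b+n)}{\Gamma(c+n)}\frac{z^n}{n!}$. *)

theory Defs
  imports "HOL-Analysis.Analysis"
begin

text \<open>Functions on \<open>\<real>\<^sup>+ = (0,\<infinity>)\<close> are represented as complex-valued functions on \<open>\<real>\<close>;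
  their values at \<open>t \<le> 0\<close> are irrelevant.\<close>

definition Lp_pos :: "real \<Rightarrow> (real \<Rightarrow> complex) \<Rightarrow> bool" where
  "Lp_pos p f \<longleftrightarrow> f \<in> borel_measurable lborel \<and>
     set_integrable lborel {0<..} (\<lambda>t. norm (f t) powr p)"

definition Ces :: "real \<Rightarrow> (real \<Rightarrow> complex) \<Rightarrow> real \<Rightarrow> complex" where
  "Ces \<gamma> f t = complex_of_real (\<gamma> / t powr \<gamma>) *
     (LINT s:{0<..<t}|lborel. complex_of_real ((t - s) powr (\<gamma> - 1)) * f s)"

definition Ces_star :: "real \<Rightarrow> (real \<Rightarrow> complex) \<Rightarrow> real \<Rightarrow> complex" where
  "Ces_star \<gamma> f t = complex_of_real \<gamma> *
     (LINT s:{t<..}|lborel. complex_of_real ((s - t) powr (\<gamma> - 1) / s powr \<gamma>) * f s)"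

definition hyp2F1 :: "real \<Rightarrow> real \<Rightarrow> real \<Rightarrow> real \<Rightarrow> real" where
  "hyp2F1 a b c z = Gamma c / (Gamma a * Gamma b) *
     (\<Sum>n. Gamma (a + real n) * Gamma (b + real n) / Gamma (c + real n) * z ^ n / fact n)"

end

theory Submission
  imports Defs
begin

text \<open>
  By Fubini, both \<open>C\<^sub>\<alpha> C\<^sup>*\<^sub>\<beta> f(t)\<close> and \<open>C\<^sup>*\<^sub>\<beta> C\<^sub>\<alpha> f(t)\<close> equal \<open>\<integral> f(r) K(t,r) dr\<close>, where
  \<open>K(t,r) = \<alpha>\<beta> t\<^sup>-\<^sup>\<alpha> r\<^sup>-\<^sup>\<beta> J(t,r)\<close> and \<open>J(t,r)\<close> is the integral of \<open>(t-s)\<^sup>\<alpha>\<^sup>-\<^sup>1 (r-s)\<^sup>\<beta>\<^sup>-\<^sup>1\<close> over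
  \<open>0 < s < min(t,r)\<close>; for the second composition this needs the inversion \<open>s \<mapsto> tr/s\<close>, which
  carries the inner integral over \<open>s > max(t,r)\<close> onto that over \<open>0 < s < min(t,r)\<close>.
  For \<open>r < t\<close> the substitution \<open>s = rtv/(t-r+rv)\<close> turns \<open>J\<close> into Euler's integral for
  \<open>\<^sub>2F\<^sub>1(\<alpha>+\<beta>,\<beta>;\<beta>+1;r/t)\<close>, evaluated termwise with the binomial series; the case \<open>r > t\<close>
  follows from the symmetry \<open>K\<^sub>\<alpha>\<^sub>,\<^sub>\<beta>(t,r) = K\<^sub>\<beta>\<^sub>,\<^sub>\<alpha>(r,t)\<close>.
  Fubini needs absolute integrability, which holds for almost every \<open>t\<close>: integrating the
  majorant over \<open>0 < t < B\<close> reduces it to the case \<open>\<alpha> = 1\<close>, which is finite by Young's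
  inequality because \<open>f \<in> L\<^sup>p\<close>.\<close>

lemma has_integral_diff_powr:
  fixes c u v :: real
  assumes c: "c > 0" and uv: "u \<le> v"
  shows "((\<lambda>x. (v - x) powr (c - 1)) has_integral (v - u) powr c / c) {u..v}"
    and "((\<lambda>x. (x - u) powr (c - 1)) has_integral (v - u) powr c / c) {u..v}"
proof -
  have "((\<lambda>x. (v - x) powr (c - 1)) has_integral
          (- ((v - v) powr c / c)) - (- ((v - u) powr c / c))) {u..v}"
  proof (rule fundamental_theorem_of_calculus_interior[OF uv])
    show "continuous_on {u..v} (\<lambda>x. - ((v - x) powr c / c))"
      using c by (intro continuous_intros continuous_on_powr') auto
    show "((\<lambda>x. - ((v - x) powr c / c)) has_vector_derivative (v - x) powr (c - 1)) (at x)"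
      if "x \<in> {u<..<v}" for x
      unfolding has_real_derivative_iff_has_vector_derivative[symmetric]
      using that c by (auto intro!: derivative_eq_intros simp: field_simps)
  qed
  then show "((\<lambda>x. (v - x) powr (c - 1)) has_integral (v - u) powr c / c) {u..v}"
    using c by simp
  have "((\<lambda>x. (x - u) powr (c - 1)) has_integral (v - u) powr c / c - (u - u) powr c / c) {u..v}"
  proof (rule fundamental_theorem_of_calculus_interior[OF uv])
    show "continuous_on {u..v} (\<lambda>x. (x - u) powr c / c)"
      using c by (intro continuous_intros continuous_on_powr') auto
    show "((\<lambda>x. (x - u) powr c / c) has_vector_derivative (x - u) powr (c - 1)) (at x)"
      if "x \<in> {u<..<v}" for x
      unfolding has_real_derivative_iff_has_vector_derivative[symmetric]
      using that c by (auto intro!: derivative_eq_intros simp: field_simps)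
  qed
  then show "((\<lambda>x. (x - u) powr (c - 1)) has_integral (v - u) powr c / c) {u..v}"
    using c by simp
qed

lemma nn_integral_diff_powr:
  fixes c u v :: real
  assumes "c > 0" and "u \<le> v"
  shows "(\<integral>\<^sup>+x\<in>{u..v}. ennreal ((v - x) powr (c - 1)) \<partial>lborel) = ennreal ((v - u) powr c / c)"
    and "(\<integral>\<^sup>+x\<in>{u..v}. ennreal ((x - u) powr (c - 1)) \<partial>lborel) = ennreal ((v - u) powr c / c)"
  by (rule nn_integral_has_integral_lebesgue'[OF _ has_integral_diff_powr(1)[OF assms]]; simp)
     (rule nn_integral_has_integral_lebesgue'[OF _ has_integral_diff_powr(2)[OF assms]]; simp)

lemma nn_integral_powr_Ici:
  fixes e a :: real
  assumes "e < -1" and "a > 0"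
  shows "(\<integral>\<^sup>+x\<in>{a..}. ennreal (x powr e) \<partial>lborel) = ennreal (- (a powr (e + 1)) / (e + 1))"
  by (rule nn_integral_has_integral_lebesgue'[OF _ has_integral_powr_to_inf[OF assms]]) auto

lemma nn_integral_Ioo_eq_Icc:
  "(\<integral>\<^sup>+x\<in>{u<..<v}. g x \<partial>lborel) = (\<integral>\<^sup>+x\<in>{u..v::real}. g x \<partial>lborel)"
proof (rule nn_integral_cong_AE)
  show "AE x in lborel. g x * indicator {u<..<v} x = g x * indicator {u..v} x"
    using AE_lborel_singleton[of u] AE_lborel_singleton[of v]
    by eventually_elim (auto simp: indicator_def)
qed

lemma nn_integral_Ioc_eq_Icc:
  "(\<integral>\<^sup>+x\<in>{u<..v}. g x \<partial>lborel) = (\<integral>\<^sup>+x\<in>{u..v::real}. g x \<partial>lborel)"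
proof (rule nn_integral_cong_AE)
  show "AE x in lborel. g x * indicator {u<..v} x = g x * indicator {u..v} x"
    using AE_lborel_singleton[of u] by eventually_elim (auto simp: indicator_def)
qed

lemma nn_integral_Ioi_eq_Ici:
  "(\<integral>\<^sup>+x\<in>{u<..}. g x \<partial>lborel) = (\<integral>\<^sup>+x\<in>{u::real..}. g x \<partial>lborel)"
proof (rule nn_integral_cong_AE)
  show "AE x in lborel. g x * indicator {u<..} x = g x * indicator {u..} x"
    using AE_lborel_singleton[of u] by eventually_elim (auto simp: indicator_def)
qed

lemma nn_integral_incseq_Union:
  fixes F :: "real \<Rightarrow> ennreal" and A :: "nat \<Rightarrow> real set"
  assumes [measurable]: "F \<in> borel_measurable borel" "\<And>n. A n \<in> sets borel" and "incseq A"
  shows "(SUP n. \<integral>\<^sup>+x\<in>A n. F x \<partial>lborel) = (\<integral>\<^sup>+x\<in>(\<Union>n. A n). F x \<partial>lborel)"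
proof -
  have "(SUP n. emeasure (density lborel F) (A n)) = emeasure (density lborel F) (\<Union>n. A n)"
    using assms by (intro SUP_emeasure_incseq) auto
  then show ?thesis
    by (simp add: emeasure_density)
qed

section \<open>Euler's integral for \<open>\<^sub>2F\<^sub>1(A,b;b+1;x)\<close>\<close>

lemma negative_binomial_series:
  fixes y A :: real
  assumes "0 \<le> y" and "y < 1"
  shows "(\<lambda>n. pochhammer A n / fact n * y ^ n) sums ((1 - y) powr (- A))"
proof -
  have "((- A) gchoose n) * (- y) ^ n = pochhammer A n / fact n * y ^ n" for n
  proof -
    have "((- A) gchoose n) * (- y) ^ n = ((-1) ^ n * (-1) ^ n) * (pochhammer A n / fact n * y ^ n)"
      by (simp add: gbinomial_pochhammer power_minus[of y])
    also have "(-1::real) ^ n * (-1) ^ n = 1"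
      by (simp flip: power_mult_distrib)
    finally show ?thesis
      by simp
  qed
  moreover have "(\<lambda>n. ((- A) gchoose n) * (- y) ^ n) sums ((1 + - y) powr (- A))"
    using assms by (intro gen_binomial_real) simp
  ultimately show ?thesis
    by simp
qed

definition hyp_series :: "real \<Rightarrow> real \<Rightarrow> real \<Rightarrow> real" where
  "hyp_series A b x = (\<Sum>n. pochhammer A n / fact n * x ^ n / (b + real n))"

lemma summable_hyp_series:
  fixes A b x :: real
  assumes A: "A > 0" and b: "b > 0" and x: "0 \<le> x" "x < 1"
  shows "summable (\<lambda>n. pochhammer A n / fact n * x ^ n / (b + real n))"
proof (rule summable_comparison_test)
  show "summable (\<lambda>n. pochhammer A n / fact n * x ^ n / b)"
    using negative_binomial_series[OF x, of A] by (intro summable_divide) (auto simp: sums_iff)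
  have "norm (pochhammer A n / fact n * x ^ n / (b + real n)) \<le> pochhammer A n / fact n * x ^ n / b"
    for n
    using A b x by (auto intro!: divide_left_mono simp: pochhammer_nonneg)
  then show "\<exists>N. \<forall>n\<ge>N. norm (pochhammer A n / fact n * x ^ n / (b + real n))
                         \<le> pochhammer A n / fact n * x ^ n / b"
    by blast
qed

lemma hyp_series_nonneg:
  "A > 0 \<Longrightarrow> b > 0 \<Longrightarrow> 0 \<le> x \<Longrightarrow> x < 1 \<Longrightarrow> hyp_series A b x \<ge> 0"
  unfolding hyp_series_def by (intro suminf_nonneg summable_hyp_series) (auto simp: pochhammer_nonneg)

lemma hyp2F1_eq_hyp_series:
  fixes A b x :: real
  assumes A: "A > 0" and b: "b > 0" and x: "0 \<le> x" "x < 1"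
  shows "hyp2F1 A b (b + 1) x = b * hyp_series A b x"
proof -
  have not_nonpos_Int: "c \<notin> \<int>\<^sub>\<le>\<^sub>0" if "c > 0" for c :: real
    using that nonpos_Ints_nonpos by fastforce
  have summand: "Gamma (A + real n) * Gamma (b + real n) / Gamma (b + 1 + real n) * x ^ n / fact n
      = Gamma A * (pochhammer A n / fact n * x ^ n / (b + real n))" for n
  proof -
    have "Gamma (b + 1 + real n) = (b + real n) * Gamma (b + real n)"
      using Gamma_plus1[OF not_nonpos_Int[of "b + real n"]] b by (simp add: add_ac)
    moreover have "Gamma (b + real n) > 0"
      using b by (intro Gamma_real_pos) auto
    ultimately have "Gamma (A + real n) * Gamma (b + real n) / Gamma (b + 1 + real n)
        = Gamma (A + real n) / (b + real n)"
      by simp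
    moreover have "Gamma (A + real n) = pochhammer A n * Gamma A"
      using pochhammer_Gamma[OF not_nonpos_Int[OF A], of n] Gamma_real_pos[OF A] by simp
    ultimately show ?thesis
      by (simp add: mult_ac)
  qed
  have "(\<Sum>n. Gamma (A + real n) * Gamma (b + real n) / Gamma (b + 1 + real n) * x ^ n / fact n)
      = Gamma A * hyp_series A b x"
    unfolding summand hyp_series_def by (rule suminf_mult[OF summable_hyp_series[OF A b x]])
  moreover have "Gamma (b + 1) = b * Gamma b"
    using Gamma_plus1[OF not_nonpos_Int[OF b]] .
  ultimately show ?thesis
    using Gamma_real_pos[OF A] Gamma_real_pos[OF b] by (simp add: hyp2F1_def field_simps)
qed

lemma nn_integral_euler_hyp_series:
  fixes A b x :: real
  assumes A: "A > 0" and b: "b > 0" and x: "0 \<le> x" "x < 1"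
  shows "(\<integral>\<^sup>+v\<in>{0..1}. ennreal ((1 - v) powr (b - 1) * (1 - x * (1 - v)) powr (- A)) \<partial>lborel)
       = ennreal (hyp_series A b x)"
proof -
  define c where "c n = pochhammer A n / fact n * x ^ n" for n
  have c_nonneg: "c n \<ge> 0" for n
    using A x by (auto simp: c_def pochhammer_nonneg)
  have expand: "ennreal ((1 - v) powr (b - 1) * (1 - x * (1 - v)) powr (- A)) * indicator {0..1} v
      = (\<Sum>n. ennreal (c n * (1 - v) powr (b - 1 + real n)) * indicator {0..1} v)" for v
  proof (cases "v \<in> {0..1}")
    case True
    have "0 \<le> x * (1 - v)" "x * (1 - v) < 1"
      using True x by (auto intro: mult_nonneg_nonneg) (smt (verit) mult_left_le)
    from sums_mult[OF negative_binomial_series[OF this, of A], of "(1 - v) powr (b - 1)"]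
    have "(\<lambda>n. (1 - v) powr (b - 1) * (c n * (1 - v) ^ n))
            sums ((1 - v) powr (b - 1) * (1 - x * (1 - v)) powr (- A))"
      by (simp add: c_def power_mult_distrib mult_ac)
    moreover have "(1 - v) powr (b - 1) * (1 - v) ^ n = (1 - v) powr (b - 1 + real n)" for n
      using True by (cases "v = 1") (auto simp: powr_add powr_realpow)
    ultimately have "(\<lambda>n. c n * (1 - v) powr (b - 1 + real n))
            sums ((1 - v) powr (b - 1) * (1 - x * (1 - v)) powr (- A))"
      by (simp add: mult.left_commute)
    then have "(\<Sum>n. ennreal (c n * (1 - v) powr (b - 1 + real n)))
             = ennreal ((1 - v) powr (b - 1) * (1 - x * (1 - v)) powr (- A))"
      by (rule suminf_ennreal_eq[rotated]) (use c_nonneg in auto)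
    then show ?thesis
      using True by simp
  qed simp
  have summand: "(\<integral>\<^sup>+v. ennreal (c n * (1 - v) powr (b - 1 + real n)) * indicator {0..1} v \<partial>lborel)
      = ennreal (c n / (b + real n))" for n
  proof -
    have "(\<integral>\<^sup>+v. ennreal (c n * (1 - v) powr (b - 1 + real n)) * indicator {0..1} v \<partial>lborel)
        = ennreal (c n) * (\<integral>\<^sup>+v\<in>{0..1}. ennreal ((1 - v) powr ((b + real n) - 1)) \<partial>lborel)"
      by (subst nn_integral_cmult[symmetric])
         (auto intro!: nn_integral_cong simp: ennreal_mult' c_nonneg mult_ac diff_add_eq)
    also have "\<dots> = ennreal (c n / (b + real n))"
      using b c_nonneg by (subst nn_integral_diff_powr(1)) (auto simp: ennreal_mult'[symmetric])
    finally show ?thesis .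
  qed
  have "(\<integral>\<^sup>+v\<in>{0..1}. ennreal ((1 - v) powr (b - 1) * (1 - x * (1 - v)) powr (- A)) \<partial>lborel)
      = (\<Sum>n. ennreal (c n / (b + real n)))"
    unfolding expand summand[symmetric] by (rule nn_integral_suminf) auto
  also have "\<dots> = ennreal (hyp_series A b x)"
  proof (rule suminf_ennreal_eq)
    show "0 \<le> c n / (b + real n)" for n
      using c_nonneg[of n] b by simp
    show "(\<lambda>n. c n / (b + real n)) sums hyp_series A b x"
      unfolding hyp_series_def c_def using summable_hyp_series[OF A b x] by (rule summable_sums)
  qed
  finally show ?thesis .
qed

section \<open>The kernel of \<open>C\<^sub>a C\<^sup>*\<^sub>b\<close>\<close>

definition Ces_kernel :: "real \<Rightarrow> real \<Rightarrow> real \<Rightarrow> real \<Rightarrow> ennreal" where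
  "Ces_kernel a b t r =
     (\<integral>\<^sup>+s\<in>{0<..<min t r}. ennreal ((t - s) powr (a - 1) * (r - s) powr (b - 1)) \<partial>lborel)"

lemma Ces_kernel_swap: "Ces_kernel a b t r = Ces_kernel b a r t"
  unfolding Ces_kernel_def by (simp add: min.commute mult.commute)

lemma Ces_kernel_nonpos: "r \<le> 0 \<Longrightarrow> Ces_kernel a b t r = 0"
  by (simp add: Ces_kernel_def)

lemma Ces_kernel_one:
  fixes b t r :: real
  assumes "b > 0" and "0 < r" and "r < t"
  shows "Ces_kernel 1 b t r = ennreal (r powr b / b)"
proof -
  have "Ces_kernel 1 b t r = (\<integral>\<^sup>+s\<in>{0..r}. ennreal ((r - s) powr (b - 1)) \<partial>lborel)"
    unfolding Ces_kernel_def nn_integral_Ioo_eq_Icc[symmetric] using assms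
    by (intro nn_integral_cong) (auto simp: indicator_def)
  also have "\<dots> = ennreal (r powr b / b)"
    using nn_integral_diff_powr(1)[of b 0 r] assms by simp
  finally show ?thesis .
qed

lemma euler_substitution_identity:
  fixes a b t r v :: real
  assumes r: "0 < r" "r < t" and v: "0 \<le> v" "v \<le> 1"
  defines "D \<equiv> t - r + r * v"
  shows "(t - r * t * v / D) powr (a - 1) * (r - r * t * v / D) powr (b - 1) * (r * t * (t - r) / D\<^sup>2)
       = t powr a * r powr b * (t - r) powr (a + b - 1) * t powr (- (a + b))
         * ((1 - v) powr (b - 1) * (1 - r / t * (1 - v)) powr (- (a + b)))"
proof (cases "v = 1")
  case True
  then show ?thesis
    using r by (simp add: D_def)
next
  case False
  define Q where "Q = t - r"
  define u where "u = 1 - v"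
  have pos: "t > 0" "Q > 0" "u > 0" "D > 0"
    using r v False by (auto simp: Q_def u_def D_def intro: add_pos_nonneg)
  have "t - r * t * v / D = t * Q / D" and "r - r * t * v / D = r * Q * u / D"
    and "1 - r / t * (1 - v) = D / t"
    using pos r by (simp_all add: D_def Q_def u_def field_simps)
  moreover have "ln ((t * Q / D) powr (a - 1) * (r * Q * u / D) powr (b - 1) * (r * t * Q / D\<^sup>2))
      = ln (t powr a * r powr b * Q powr (a + b - 1) * t powr (- (a + b))
            * (u powr (b - 1) * (D / t) powr (- (a + b))))"
    using pos r by (simp add: ln_mult ln_div ln_powr ln_realpow algebra_simps)
  ultimately show ?thesis
    using pos r by (subst (asm) ln_inj_iff) (auto simp: Q_def u_def)
qed

lemma Ces_kernel_below:
  fixes a b t r :: real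
  assumes a: "a > 0" and b: "b > 0" and r: "0 < r" "r < t"
  shows "Ces_kernel a b t r
       = ennreal (t powr a * r powr b * (t - r) powr (a + b - 1) * t powr (- (a + b)))
         * ennreal (hyp_series (a + b) b (r / t))"
proof -
  define \<phi> where "\<phi> s = (t - s) powr (a - 1) * (r - s) powr (b - 1)" for s
  define g where "g v = r * t * v / (t - r + r * v)" for v
  define g' where "g' v = r * t * (t - r) / (t - r + r * v)\<^sup>2" for v
  define K where "K = t powr a * r powr b * (t - r) powr (a + b - 1) * t powr (- (a + b))"
  define \<psi> where "\<psi> v = (1 - v) powr (b - 1) * (1 - r / t * (1 - v)) powr (- (a + b))" for v
  have D: "t - r + r * v > 0" if "v \<in> {0..1}" for v
    using that r by (auto intro: add_pos_nonneg)
  have "Ces_kernel a b t r = (\<integral>\<^sup>+s. ennreal (\<phi> s) * indicator {g 0..g 1} s \<partial>lborel)"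
    unfolding Ces_kernel_def \<phi>_def using r by (simp add: nn_integral_Ioo_eq_Icc g_def)
  also have "\<dots> = (\<integral>\<^sup>+v. ennreal (\<phi> (g v)) * ennreal (g' v) * indicator {0..1} v \<partial>lborel)"
  proof (rule nn_integral_substitution_aux)
    show "(g has_real_derivative g' v) (at v)" if "v \<in> {0..1}" for v
      using D[OF that] unfolding g_def g'_def
      by (auto intro!: derivative_eq_intros simp: field_simps power2_eq_square)
    show "continuous_on {0..1} g'"
      unfolding g'_def using D by (intro continuous_intros) fastforce
    show "g' v \<ge> 0" if "v \<in> {0..1}" for v
      unfolding g'_def using r by auto
  qed (auto simp: \<phi>_def)
  also have "\<dots> = (\<integral>\<^sup>+v. ennreal K * (ennreal (\<psi> v) * indicator {0..1} v) \<partial>lborel)"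
  proof (intro nn_integral_cong)
    fix v :: real
    have "\<phi> (g v) * g' v = K * \<psi> v" if "v \<in> {0..1}"
      using euler_substitution_identity[of r t v a b] that r
      by (simp add: \<phi>_def g_def g'_def K_def \<psi>_def)
    moreover have "g' v \<ge> 0" "\<phi> (g v) \<ge> 0" "K \<ge> 0" "\<psi> v \<ge> 0"
      unfolding g'_def \<phi>_def K_def \<psi>_def using r by auto
    ultimately show "ennreal (\<phi> (g v)) * ennreal (g' v) * indicator {0..1} v
        = ennreal K * (ennreal (\<psi> v) * indicator {0..1} v)"
      by (cases "v \<in> {0..1}") (simp_all add: ennreal_mult'[symmetric] ennreal_mult[symmetric])
  qed
  also have "\<dots> = ennreal K * (\<integral>\<^sup>+v\<in>{0..1}. ennreal (\<psi> v) \<partial>lborel)"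
    by (rule nn_integral_cmult) (auto simp: \<psi>_def)
  also have "(\<integral>\<^sup>+v\<in>{0..1}. ennreal (\<psi> v) \<partial>lborel) = ennreal (hyp_series (a + b) b (r / t))"
    unfolding \<psi>_def using a b r by (intro nn_integral_euler_hyp_series) auto
  finally show ?thesis
    by (simp add: K_def)
qed

definition Ces_comp_kernel :: "real \<Rightarrow> real \<Rightarrow> real \<Rightarrow> real \<Rightarrow> real" where
  "Ces_comp_kernel a b t r = a * b / t powr a * (r powr (- b) * enn2real (Ces_kernel a b t r))"

lemma Ces_comp_kernel_swap: "Ces_comp_kernel a b t r = Ces_comp_kernel b a r t"
  by (simp add: Ces_comp_kernel_def Ces_kernel_swap[of a b] powr_minus divide_inverse mult_ac)

lemma Ces_comp_kernel_nonpos: "r \<le> 0 \<Longrightarrow> Ces_comp_kernel a b t r = 0"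
  by (simp add: Ces_comp_kernel_def Ces_kernel_nonpos)

lemma Ces_comp_kernel_below:
  fixes a b t r :: real
  assumes a: "a > 0" and b: "b > 0" and r: "0 < r" "r < t"
  shows "Ces_comp_kernel a b t r
       = a * (1 / (t - r) * ((t - r) / t) powr (a + b) * hyp2F1 (a + b) b (b + 1) (r / t))"
proof -
  define P where "P = t powr a * r powr b * (t - r) powr (a + b - 1) * t powr (- (a + b))"
  define E where "E = hyp_series (a + b) b (r / t)"
  have x: "0 \<le> r / t" "r / t < 1"
    using r by auto
  have "a * b / t powr a * (r powr (- b) * P) = a * b * (1 / (t - r) * ((t - r) / t) powr (a + b))"
    unfolding P_def using r by (simp add: powr_minus powr_diff powr_divide powr_add field_simps)
  moreover have "enn2real (Ces_kernel a b t r) = P * E"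
    using hyp_series_nonneg[of "a + b" b "r / t"] a b x
    by (simp add: Ces_kernel_below[OF a b r] enn2real_mult P_def E_def)
  moreover have "hyp2F1 (a + b) b (b + 1) (r / t) = b * E"
    unfolding E_def using a b x by (intro hyp2F1_eq_hyp_series) auto
  ultimately show ?thesis
    unfolding Ces_comp_kernel_def by (metis mult.assoc mult.left_commute)
qed

lemma Ces_comp_kernel_above:
  fixes a b t r :: real
  assumes "a > 0" and "b > 0" and "0 < t" and "t < r"
  shows "Ces_comp_kernel a b t r
       = b * (1 / (r - t) * ((r - t) / r) powr (a + b) * hyp2F1 (a + b) a (a + 1) (t / r))"
  using Ces_comp_kernel_below[of b a t r] assms by (simp add: Ces_comp_kernel_swap[of a] add.commute)

lemma Ces_comp_kernel_one_below:
  fixes b t r :: real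
  assumes "b > 0" and "0 < r" and "r < t"
  shows "Ces_comp_kernel 1 b t r = 1 / t"
  using assms by (simp add: Ces_comp_kernel_def Ces_kernel_one powr_minus field_simps)

lemma Ces_comp_kernel_one_above:
  fixes a t r :: real
  assumes "a > 0" and "0 < t" and "t < r"
  shows "Ces_comp_kernel a 1 t r = 1 / r"
  using Ces_comp_kernel_one_below[of a t r] assms by (simp add: Ces_comp_kernel_swap[of a])

section \<open>The inversion \<open>s \<mapsto> tr/s\<close>\<close>

definition Ces_star_kernel :: "real \<Rightarrow> real \<Rightarrow> real \<Rightarrow> real \<Rightarrow> ennreal" where
  "Ces_star_kernel a b t r = (\<integral>\<^sup>+s\<in>{max t r<..}.
     ennreal ((s - t) powr (b - 1) / s powr b * (1 / s powr a) * (s - r) powr (a - 1)) \<partial>lborel)"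

lemma inversion_substitution_identity:
  fixes a b t r u :: real
  assumes t: "t > 0" and r: "r > 0" and u: "0 < u" "u \<le> t" "u \<le> r"
  shows "(t * r / u - t) powr (b - 1) / (t * r / u) powr b * (1 / (t * r / u) powr a)
           * (t * r / u - r) powr (a - 1) * (t * r / u\<^sup>2)
       = t powr (- a) * r powr (- b) * ((t - u) powr (a - 1) * (r - u) powr (b - 1))"
proof -
  have "t * r / u - t = t * (r - u) / u" and "t * r / u - r = r * (t - u) / u"
    using u by (simp_all add: field_simps)
  moreover have "ln ((t * P / u) powr (b - 1) / (t * r / u) powr b * (1 / (t * r / u) powr a)
                      * (r * Q / u) powr (a - 1) * (t * r / u\<^sup>2))
               = ln (t powr (- a) * r powr (- b) * (Q powr (a - 1) * P powr (b - 1)))"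
    if "P > 0" "Q > 0" for P Q
    using that t r u by (simp add: ln_mult ln_div ln_powr ln_realpow algebra_simps)
  ultimately show ?thesis
    using t r u by (cases "u = t \<or> u = r") (auto simp: ln_inj_iff)
qed

text \<open>The substitution \<open>s = tr/u\<close>, truncated to \<open>u \<ge> e\<close> and written as \<open>s = g(-u)\<close> with the
  increasing map \<open>g x = -tr/x\<close>, because \<open>nn_integral_substitution_aux\<close> wants a compact
  interval and a monotone substitution.\<close>

lemma nn_integral_inversion_truncated:
  fixes a b t r e :: real
  assumes t: "t > 0" and r: "r > 0" and e: "0 < e" "e < min t r"
  shows "(\<integral>\<^sup>+s\<in>{max t r..t * r / e}.
            ennreal ((s - t) powr (b - 1) / s powr b * (1 / s powr a) * (s - r) powr (a - 1)) \<partial>lborel)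
       = (\<integral>\<^sup>+u\<in>{e..min t r}.
            ennreal (t powr (- a) * r powr (- b) * ((t - u) powr (a - 1) * (r - u) powr (b - 1))) \<partial>lborel)"
proof -
  define m where "m = min t r"
  define L where "L s = (s - t) powr (b - 1) / s powr b * (1 / s powr a) * (s - r) powr (a - 1)" for s
  define J where "J u = t powr (- a) * r powr (- b) * ((t - u) powr (a - 1) * (r - u) powr (b - 1))"
    for u
  define g where "g x = - (t * r) / x" for x :: real
  define g' where "g' x = t * r / x\<^sup>2" for x :: real
  have "max t r = g (- m)" and "t * r / e = g (- e)"
    using t r by (auto simp: m_def g_def min_def max_def)
  then have "(\<integral>\<^sup>+s\<in>{max t r..t * r / e}. ennreal (L s) \<partial>lborel)
      = (\<integral>\<^sup>+s. ennreal (L s) * indicator {g (- m)..g (- e)} s \<partial>lborel)"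
    by simp
  also have "\<dots> = (\<integral>\<^sup>+x. ennreal (L (g x)) * ennreal (g' x) * indicator {- m..- e} x \<partial>lborel)"
  proof (rule nn_integral_substitution_aux)
    show "(g has_real_derivative g' x) (at x)" if "x \<in> {- m..- e}" for x
      using that e unfolding g_def g'_def
      by (auto intro!: derivative_eq_intros simp: field_simps power2_eq_square m_def)
    show "continuous_on {- m..- e} g'"
      unfolding g'_def using e by (intro continuous_intros) auto
    show "g' x \<ge> 0" if "x \<in> {- m..- e}" for x
      unfolding g'_def using t r by auto
  qed (use e in \<open>auto simp: L_def m_def\<close>)
  also have "\<dots> = (\<integral>\<^sup>+x. ennreal (J (- x)) * indicator {- m..- e} x \<partial>lborel)"
  proof (intro nn_integral_cong)
    fix x :: real
    have "L (g x) * g' x = J (- x)" if "x \<in> {- m..- e}"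
      using inversion_substitution_identity[of t r "- x" b a] that t r e
      by (simp add: L_def J_def g_def g'_def m_def min_def split: if_splits)
    moreover have "L (g x) \<ge> 0" "g' x \<ge> 0"
      unfolding L_def g'_def using t r by auto
    ultimately show "ennreal (L (g x)) * ennreal (g' x) * indicator {- m..- e} x
        = ennreal (J (- x)) * indicator {- m..- e} x"
      by (cases "x \<in> {- m..- e}") (simp_all add: ennreal_mult[symmetric])
  qed
  also have "\<dots> = (\<integral>\<^sup>+u. ennreal (J u) * indicator {e..m} u \<partial>lborel)"
  proof -
    define F where "F u = ennreal (J u) * indicator {e..m} u" for u
    have "F \<in> borel_measurable borel"
      unfolding F_def J_def by measurable
    have "(\<integral>\<^sup>+x. ennreal (J (- x)) * indicator {- m..- e} x \<partial>lborel) = (\<integral>\<^sup>+x. F (- x) \<partial>lborel)"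
      by (intro nn_integral_cong) (auto simp: F_def indicator_def)
    also have "\<dots> = (\<integral>\<^sup>+u. F u \<partial>lborel)"
      using nn_integral_real_affine[OF \<open>F \<in> borel_measurable borel\<close>, where c = "-1" and t = 0]
      by simp
    finally show ?thesis
      by (simp add: F_def)
  qed
  finally show ?thesis
    by (simp add: L_def J_def m_def)
qed

lemma UN_Icc_mult_eq_Ici:
  fixes M :: real
  assumes "M > 0"
  shows "(\<Union>n. {M..(real n + 2) * M}) = {M..}"
proof (intro antisym subsetI)
  fix s assume s: "s \<in> {M..}"
  obtain n :: nat where "s / M \<le> real n"
    using real_arch_simple by blast
  then have "s \<le> (real n + 2) * M"
    using assms by (simp add: divide_le_eq algebra_simps)
  with s show "s \<in> (\<Union>n. {M..(real n + 2) * M})"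
    by auto
qed auto

lemma UN_Icc_divide_eq_Ioc:
  fixes m :: real
  assumes "m > 0"
  shows "(\<Union>n. {m / (real n + 2)..m}) = {0<..m}"
proof (intro antisym subsetI)
  fix u assume u: "u \<in> {0<..m}"
  obtain n :: nat where "m / u \<le> real n"
    using real_arch_simple by blast
  then have "m / (real n + 2) \<le> u"
    using u assms by (simp add: field_simps)
  with u show "u \<in> (\<Union>n. {m / (real n + 2)..m})"
    by auto
next
  fix u assume "u \<in> (\<Union>n. {m / (real n + 2)..m})"
  then obtain n :: nat where "m / (real n + 2) \<le> u" "u \<le> m"
    by auto
  moreover have "0 < m / (real n + 2)"
    using assms by simp
  ultimately show "u \<in> {0<..m}"
    by auto
qed

lemma Ces_star_kernel_eq:
  fixes a b t r :: real
  assumes t: "t > 0" and r: "r > 0"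
  shows "Ces_star_kernel a b t r = ennreal (t powr (- a) * r powr (- b)) * Ces_kernel a b t r"
proof -
  define m where "m = min t r"
  define M where "M = max t r"
  define L where "L s = (s - t) powr (b - 1) / s powr b * (1 / s powr a) * (s - r) powr (a - 1)" for s
  define C where "C = t powr (- a) * r powr (- b)"
  define J where "J u = (t - u) powr (a - 1) * (r - u) powr (b - 1)" for u
  have m: "m > 0" "M > 0" "t * r / (m / (real n + 2)) = (real n + 2) * M" for n
    using t r by (auto simp: m_def M_def min_def max_def)
  have "Ces_star_kernel a b t r = (\<integral>\<^sup>+s\<in>(\<Union>n. {M..(real n + 2) * M}). ennreal (L s) \<partial>lborel)"
    unfolding UN_Icc_mult_eq_Ici[OF m(2)] unfolding Ces_star_kernel_def L_def M_def
    by (simp add: nn_integral_Ioi_eq_Ici)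
  also have "\<dots> = (SUP n. \<integral>\<^sup>+s\<in>{M..(real n + 2) * M}. ennreal (L s) \<partial>lborel)"
    using m by (intro nn_integral_incseq_Union[symmetric])
      (auto simp: L_def incseq_def intro!: mult_right_mono)
  also have "\<dots> = (SUP n. \<integral>\<^sup>+u\<in>{m / (real n + 2)..m}. ennreal (C * J u) \<partial>lborel)"
  proof (intro SUP_cong refl)
    fix n :: nat
    have "m * 1 < m * (real n + 2)"
      using m by (intro mult_strict_left_mono) auto
    then have "0 < m / (real n + 2)" "m / (real n + 2) < m"
      using m by (auto simp: divide_less_eq)
    from nn_integral_inversion_truncated[OF t r this[unfolded m_def], of b a]
    show "(\<integral>\<^sup>+s\<in>{M..(real n + 2) * M}. ennreal (L s) \<partial>lborel)
        = (\<integral>\<^sup>+u\<in>{m / (real n + 2)..m}. ennreal (C * J u) \<partial>lborel)"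
      using m(3)[of n] by (simp add: L_def C_def J_def M_def m_def)
  qed
  also have "\<dots> = (\<integral>\<^sup>+u\<in>{0<..m}. ennreal (C * J u) \<partial>lborel)"
    unfolding UN_Icc_divide_eq_Ioc[OF m(1), symmetric] using m
    by (intro nn_integral_incseq_Union) (auto simp: J_def incseq_def intro!: divide_left_mono)
  also have "\<dots> = (\<integral>\<^sup>+u\<in>{0<..<m}. ennreal (C * J u) \<partial>lborel)"
    by (simp only: nn_integral_Ioo_eq_Icc nn_integral_Ioc_eq_Icc)
  also have "\<dots> = (\<integral>\<^sup>+u. ennreal C * (ennreal (J u) * indicator {0<..<m} u) \<partial>lborel)"
    by (intro nn_integral_cong) (simp add: C_def J_def ennreal_mult mult_ac)
  also have "\<dots> = ennreal C * Ces_kernel a b t r"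
    unfolding Ces_kernel_def J_def m_def by (rule nn_integral_cmult) simp
  finally show ?thesis
    by (simp add: C_def)
qed

section \<open>Absolute integrability for almost every \<open>t\<close>\<close>

definition Ces_kernel_integrand :: "real \<Rightarrow> real \<Rightarrow> real \<Rightarrow> real \<Rightarrow> real \<Rightarrow> real" where
  "Ces_kernel_integrand a b t r s =
     (if 0 < s \<and> s < t \<and> s < r then (t - s) powr (a - 1) * (r - s) powr (b - 1) else 0)"

lemma Ces_kernel_integrand_nonneg: "Ces_kernel_integrand a b t r s \<ge> 0"
  unfolding Ces_kernel_integrand_def by auto

lemma Ces_kernel_eq_integrand:
  "Ces_kernel a b t r = (\<integral>\<^sup>+s. ennreal (Ces_kernel_integrand a b t r s) \<partial>lborel)"
  unfolding Ces_kernel_def Ces_kernel_integrand_def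
  by (intro nn_integral_cong) (auto simp: indicator_def)

definition Ces_majorant :: "real \<Rightarrow> real \<Rightarrow> (real \<Rightarrow> complex) \<Rightarrow> real \<Rightarrow> ennreal" where
  "Ces_majorant a b f t =
     (\<integral>\<^sup>+r. \<integral>\<^sup>+s. ennreal (norm (f r) * r powr (- b) * Ces_kernel_integrand a b t r s) \<partial>lborel \<partial>lborel)"

lemma Ces_majorant_eq:
  "Ces_majorant a b f t = (\<integral>\<^sup>+r. ennreal (norm (f r) * r powr (- b)) * Ces_kernel a b t r \<partial>lborel)"
  unfolding Ces_majorant_def Ces_kernel_eq_integrand
  by (subst nn_integral_cmult[symmetric])
     (auto simp: Ces_kernel_integrand_def ennreal_mult Ces_kernel_integrand_nonneg
           intro!: nn_integral_cong)

lemma nn_integral_Ces_kernel_integrand_le: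
  fixes a b B r s :: real
  assumes a: "a > 0" and B: "B > 0"
  shows "(\<integral>\<^sup>+t\<in>{0<..<B}. ennreal (Ces_kernel_integrand a b t r s) \<partial>lborel)
       \<le> ennreal (B powr a / a) * ennreal (Ces_kernel_integrand 1 b B r s)"
proof (cases "0 < s \<and> s < r \<and> s < B")
  case True
  have "(\<integral>\<^sup>+t\<in>{0<..<B}. ennreal (Ces_kernel_integrand a b t r s) \<partial>lborel)
      = (\<integral>\<^sup>+t. ennreal ((r - s) powr (b - 1)) * (ennreal ((t - s) powr (a - 1)) * indicator {s<..<B} t) \<partial>lborel)"
    using True
    by (intro nn_integral_cong) (auto simp: Ces_kernel_integrand_def indicator_def ennreal_mult mult_ac)
  also have "\<dots> = ennreal ((r - s) powr (b - 1)) * (\<integral>\<^sup>+t\<in>{s<..<B}. ennreal ((t - s) powr (a - 1)) \<partial>lborel)"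
    by (rule nn_integral_cmult) simp
  also have "(\<integral>\<^sup>+t\<in>{s<..<B}. ennreal ((t - s) powr (a - 1)) \<partial>lborel) = ennreal ((B - s) powr a / a)"
    using a True by (simp add: nn_integral_Ioo_eq_Icc nn_integral_diff_powr(2))
  also have "ennreal ((r - s) powr (b - 1)) * ennreal ((B - s) powr a / a)
      \<le> ennreal ((r - s) powr (b - 1)) * ennreal (B powr a / a)"
    using a True by (intro mult_left_mono ennreal_leI divide_right_mono powr_mono2) auto
  also have "\<dots> = ennreal (B powr a / a) * ennreal (Ces_kernel_integrand 1 b B r s)"
    using True by (simp add: Ces_kernel_integrand_def mult_ac)
  finally show ?thesis .
next
  case False
  then have "(\<integral>\<^sup>+t\<in>{0<..<B}. ennreal (Ces_kernel_integrand a b t r s) \<partial>lborel)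
      = (\<integral>\<^sup>+t. 0 \<partial>(lborel :: real measure))"
    by (intro nn_integral_cong) (auto simp: Ces_kernel_integrand_def indicator_def)
  then show ?thesis
    by simp
qed

lemma nn_integral_Ces_majorant_le:
  fixes f :: "real \<Rightarrow> complex"
  assumes a: "a > 0" and B: "B > 0" and [measurable]: "f \<in> borel_measurable lborel"
  shows "(\<integral>\<^sup>+t\<in>{0<..<B}. Ces_majorant a b f t \<partial>lborel) \<le> ennreal (B powr a / a) * Ces_majorant 1 b f B"
proof -
  let ?H = "Ces_kernel_integrand"
  have [measurable]: "(\<lambda>(x, y). ?H a b x r y) \<in> borel_measurable (lborel \<Otimes>\<^sub>M lborel)" for r
    unfolding Ces_kernel_integrand_def by measurable
  have "(\<integral>\<^sup>+t\<in>{0<..<B}. Ces_majorant a b f t \<partial>lborel)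
      = (\<integral>\<^sup>+t. \<integral>\<^sup>+r. ennreal (norm (f r) * r powr (- b)) * Ces_kernel a b t r * indicator {0<..<B} t
            \<partial>lborel \<partial>lborel)"
    unfolding Ces_majorant_eq
    by (intro nn_integral_cong nn_integral_multc[symmetric])
       (unfold Ces_kernel_eq_integrand Ces_kernel_integrand_def, measurable)
  also have "\<dots> = (\<integral>\<^sup>+r. ennreal (norm (f r) * r powr (- b))
                      * (\<integral>\<^sup>+t\<in>{0<..<B}. Ces_kernel a b t r \<partial>lborel) \<partial>lborel)"
    by (subst lborel_pair.Fubini')
       (auto simp: Ces_kernel_eq_integrand Ces_kernel_integrand_def mult.assoc
             intro!: nn_integral_cong nn_integral_cmult)
  also have "\<dots> \<le> (\<integral>\<^sup>+r. ennreal (norm (f r) * r powr (- b)) * (ennreal (B powr a / a) * Ces_kernel 1 b B r)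
                      \<partial>lborel)"
  proof (intro nn_integral_mono mult_left_mono order.refl)
    fix r :: real
    have "(\<integral>\<^sup>+t\<in>{0<..<B}. Ces_kernel a b t r \<partial>lborel)
        = (\<integral>\<^sup>+t. \<integral>\<^sup>+s. ennreal (?H a b t r s) * indicator {0<..<B} t \<partial>lborel \<partial>lborel)"
      unfolding Ces_kernel_eq_integrand
      by (intro nn_integral_cong nn_integral_multc[symmetric])
         (unfold Ces_kernel_integrand_def, measurable)
    also have "\<dots> = (\<integral>\<^sup>+s. \<integral>\<^sup>+t. ennreal (?H a b t r s) * indicator {0<..<B} t \<partial>lborel \<partial>lborel)"
      by (rule lborel_pair.Fubini') measurable
    also have "\<dots> \<le> (\<integral>\<^sup>+s. ennreal (B powr a / a) * ennreal (?H 1 b B r s) \<partial>lborel)"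
      by (intro nn_integral_mono nn_integral_Ces_kernel_integrand_le a B)
    also have "\<dots> = ennreal (B powr a / a) * Ces_kernel 1 b B r"
      unfolding Ces_kernel_eq_integrand
      by (rule nn_integral_cmult) (unfold Ces_kernel_integrand_def, measurable)
    finally show "(\<integral>\<^sup>+t\<in>{0<..<B}. Ces_kernel a b t r \<partial>lborel) \<le> ennreal (B powr a / a) * Ces_kernel 1 b B r" .
  qed simp
  also have "\<dots> = ennreal (B powr a / a) * Ces_majorant 1 b f B"
    unfolding Ces_majorant_eq Ces_kernel_eq_integrand
    by (subst nn_integral_cmult[symmetric]) (auto simp: mult_ac Ces_kernel_integrand_def)
  finally show ?thesis .
qed

lemma diff_powr_le_far:
  fixes b B r s :: real
  assumes b: "b > 0" and s: "0 < s" "s < B" and r: "2 * B \<le> r"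
  shows "(r - s) powr (b - 1) \<le> max 1 (2 powr (1 - b)) * r powr (b - 1)"
proof -
  have rs: "r / 2 \<le> r - s" "r - s \<le> r" "r / 2 > 0"
    using s r by auto
  show ?thesis
  proof (cases "b \<ge> 1")
    case True
    then have "(r - s) powr (b - 1) \<le> r powr (b - 1)"
      using rs by (intro powr_mono2) auto
    also have "\<dots> \<le> max 1 (2 powr (1 - b)) * r powr (b - 1)"
      using mult_right_mono[of 1 "max 1 (2 powr (1 - b))" "r powr (b - 1)"] by simp
    finally show ?thesis .
  next
    case False
    then have "(r - s) powr (b - 1) \<le> (r / 2) powr (b - 1)"
      using rs by (intro powr_mono2') auto
    also have "\<dots> = 2 powr (1 - b) * r powr (b - 1)"
      using rs by (simp add: powr_divide powr_diff powr_minus_divide field_simps)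
    also have "\<dots> \<le> max 1 (2 powr (1 - b)) * r powr (b - 1)"
      by (intro mult_right_mono) auto
    finally show ?thesis .
  qed
qed

definition Ces_kernel_one_envelope :: "real \<Rightarrow> real \<Rightarrow> real \<Rightarrow> real" where
  "Ces_kernel_one_envelope b B r = (if r < 2 * B then 1 / b else B * max 1 (2 powr (1 - b)) / r)"

lemma Ces_kernel_one_envelope_nonneg: "b > 0 \<Longrightarrow> B > 0 \<Longrightarrow> r > 0 \<Longrightarrow> Ces_kernel_one_envelope b B r \<ge> 0"
  by (simp add: Ces_kernel_one_envelope_def)

lemma Ces_kernel_one_le:
  fixes b B r :: real
  assumes b: "b > 0" and B: "B > 0" and r: "r > 0"
  shows "Ces_kernel 1 b B r \<le> ennreal (r powr b * Ces_kernel_one_envelope b B r)"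
proof (cases "r < 2 * B")
  case True
  have "Ces_kernel 1 b B r \<le> (\<integral>\<^sup>+s\<in>{0<..<r}. ennreal ((r - s) powr (b - 1)) \<partial>lborel)"
    unfolding Ces_kernel_eq_integrand
    by (intro nn_integral_mono) (auto simp: Ces_kernel_integrand_def indicator_def)
  also have "\<dots> = ennreal (r powr b / b)"
    using nn_integral_diff_powr(1)[of b 0 r] b r by (simp add: nn_integral_Ioo_eq_Icc)
  finally show ?thesis
    using True by (simp add: Ces_kernel_one_envelope_def)
next
  case False
  define C where "C = max 1 (2 powr (1 - b))"
  have "Ces_kernel 1 b B r \<le> (\<integral>\<^sup>+s\<in>{0<..<B}. ennreal (C * r powr (b - 1)) \<partial>lborel)"
    unfolding Ces_kernel_eq_integrand
  proof (intro nn_integral_mono)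
    fix s
    show "ennreal (Ces_kernel_integrand 1 b B r s) \<le> ennreal (C * r powr (b - 1)) * indicator {0<..<B} s"
      using diff_powr_le_far[of b s B r] b False
      by (cases "0 < s \<and> s < B") (auto simp: Ces_kernel_integrand_def C_def intro!: ennreal_leI)
  qed
  also have "\<dots> = ennreal (C * r powr (b - 1) * B)"
    using B by (simp add: nn_integral_cmult_indicator ennreal_mult C_def)
  also have "C * r powr (b - 1) * B = r powr b * (B * C / r)"
    using r by (simp add: powr_diff field_simps)
  finally show ?thesis
    using False by (simp add: C_def Ces_kernel_one_envelope_def)
qed

lemma nn_integral_Ces_kernel_one_envelope_powr_finite:
  fixes b B q :: real
  assumes b: "b > 0" and B: "B > 0" and q: "q > 1"
  shows "(\<integral>\<^sup>+r\<in>{0<..}. ennreal (Ces_kernel_one_envelope b B r powr q) \<partial>lborel) < \<infinity>"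
proof -
  define C where "C = max 1 (2 powr (1 - b))"
  have "(\<integral>\<^sup>+r\<in>{0<..}. ennreal (Ces_kernel_one_envelope b B r powr q) \<partial>lborel)
      \<le> (\<integral>\<^sup>+r. ennreal ((1 / b) powr q) * indicator {0<..<2 * B} r
             + ennreal ((B * C) powr q) * (ennreal (r powr (- q)) * indicator {2 * B..} r) \<partial>lborel)"
  proof (intro nn_integral_mono)
    fix r :: real
    have "Ces_kernel_one_envelope b B r powr q = (B * C) powr q * r powr (- q)" if "r \<ge> 2 * B"
      using that B by (simp add: Ces_kernel_one_envelope_def powr_divide powr_minus_divide C_def)
    then show "ennreal (Ces_kernel_one_envelope b B r powr q) * indicator {0<..} r
        \<le> ennreal ((1 / b) powr q) * indicator {0<..<2 * B} r
           + ennreal ((B * C) powr q) * (ennreal (r powr (- q)) * indicator {2 * B..} r)"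
      using B by (cases "r < 2 * B")
        (auto simp: Ces_kernel_one_envelope_def ennreal_mult[symmetric] C_def indicator_def)
  qed
  also have "\<dots> = ennreal ((1 / b) powr q) * emeasure lborel {0<..<2 * B}
             + ennreal ((B * C) powr q) * (\<integral>\<^sup>+r\<in>{2 * B..}. ennreal (r powr (- q)) \<partial>lborel)"
    by (subst nn_integral_add) (auto simp: nn_integral_cmult_indicator nn_integral_cmult)
  also have "\<dots> < \<infinity>"
    using B q by (simp add: nn_integral_powr_Ici ennreal_mult_less_top ennreal_mult[symmetric])
  finally show ?thesis .
qed

lemma Youngs_inequality_conjugate:
  fixes p x y :: real
  assumes p: "p > 1" and "x \<ge> 0" and "y \<ge> 0"
  shows "x * y \<le> x powr p + y powr (p / (p - 1))"
proof -
  define q where "q = p / (p - 1)"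
  have q: "q > 1" and pq: "1 / p + 1 / q = 1"
    using p by (simp_all add: q_def field_simps)
  have "x * y \<le> x powr p / p + y powr q / q"
    by (rule Youngs_inequality[OF p q pq assms(2,3)])
  also have "\<dots> \<le> x powr p + y powr q"
    using p q by (intro add_mono) (simp_all add: divide_le_eq mult_le_cancel_left1)
  finally show ?thesis
    by (simp add: q_def)
qed

lemma Lp_pos_nn_integral_finite:
  assumes "Lp_pos p f"
  shows "(\<integral>\<^sup>+r\<in>{0<..}. ennreal (norm (f r) powr p) \<partial>lborel) < \<infinity>"
proof -
  have "integrable lborel (\<lambda>x. indicator {0<..} x *\<^sub>R (norm (f x) powr p))"
    using assms unfolding Lp_pos_def set_integrable_def by simp
  then have "(\<integral>\<^sup>+x. ennreal (norm (indicator {0<..} x *\<^sub>R (norm (f x) powr p))) \<partial>lborel) < \<infinity>"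
    unfolding integrable_iff_bounded by blast
  moreover have "(\<integral>\<^sup>+x. ennreal (norm (indicator {0<..} x *\<^sub>R (norm (f x) powr p))) \<partial>lborel)
      = (\<integral>\<^sup>+r\<in>{0<..}. ennreal (norm (f r) powr p) \<partial>lborel)"
    by (intro nn_integral_cong) (auto simp: indicator_def)
  ultimately show ?thesis
    by simp
qed

lemma Ces_majorant_one_finite:
  fixes f :: "real \<Rightarrow> complex"
  assumes p: "p > 1" and b: "b > 0" and B: "B > 0" and f: "Lp_pos p f"
  shows "Ces_majorant 1 b f B < \<infinity>"
proof -
  have [measurable]: "f \<in> borel_measurable lborel"
    using f by (simp add: Lp_pos_def)
  define q where "q = p / (p - 1)"
  define h where "h = Ces_kernel_one_envelope b B"
  have h_nonneg: "h r \<ge> 0" if "r > 0" for r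
    using b B that by (simp add: h_def Ces_kernel_one_envelope_nonneg)
  have "Ces_majorant 1 b f B
      \<le> (\<integral>\<^sup>+r. ennreal (norm (f r) powr p) * indicator {0<..} r
                 + ennreal (h r powr q) * indicator {0<..} r \<partial>lborel)"
    unfolding Ces_majorant_eq
  proof (intro nn_integral_mono)
    fix r :: real
    show "ennreal (norm (f r) * r powr (- b)) * Ces_kernel 1 b B r
        \<le> ennreal (norm (f r) powr p) * indicator {0<..} r + ennreal (h r powr q) * indicator {0<..} r"
    proof (cases "r > 0")
      case True
      have "ennreal (norm (f r) * r powr (- b)) * Ces_kernel 1 b B r
          \<le> ennreal (norm (f r) * r powr (- b)) * ennreal (r powr b * h r)"
        using Ces_kernel_one_le[OF b B True] by (intro mult_left_mono) (auto simp: h_def)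
      also have "\<dots> = ennreal (norm (f r) * h r)"
        using True h_nonneg[OF True]
        by (simp add: ennreal_mult'[symmetric] powr_minus field_simps)
      also have "\<dots> \<le> ennreal (norm (f r) powr p + h r powr q)"
        unfolding q_def by (intro ennreal_leI Youngs_inequality_conjugate p h_nonneg True) auto
      finally show ?thesis
        using True by (simp add: ennreal_plus)
    qed (simp add: Ces_kernel_nonpos)
  qed
  also have "\<dots> = (\<integral>\<^sup>+r\<in>{0<..}. ennreal (norm (f r) powr p) \<partial>lborel)
                 + (\<integral>\<^sup>+r\<in>{0<..}. ennreal (h r powr q) \<partial>lborel)"
    by (rule nn_integral_add) (auto simp: h_def Ces_kernel_one_envelope_def)
  also have "\<dots> < \<infinity>"
    using Lp_pos_nn_integral_finite[OF f] nn_integral_Ces_kernel_one_envelope_powr_finite[OF b B, of q] p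
    by (simp add: h_def q_def field_simps infinity_ennreal_def)
  finally show ?thesis .
qed

lemma AE_Ces_majorant_finite:
  fixes f :: "real \<Rightarrow> complex"
  assumes p: "p > 1" and a: "a > 0" and b: "b > 0" and f: "Lp_pos p f"
  shows "AE t in lborel. 0 < t \<longrightarrow> Ces_majorant a b f t \<noteq> \<infinity>"
proof -
  have [measurable]: "f \<in> borel_measurable lborel"
    using f by (simp add: Lp_pos_def)
  have "AE t in lborel. Ces_majorant a b f t * indicator {0<..<real (Suc n)} t \<noteq> \<infinity>" for n
  proof (rule nn_integral_PInf_AE)
    show "(\<lambda>t. Ces_majorant a b f t * indicator {0<..<real (Suc n)} t) \<in> borel_measurable lborel"
      unfolding Ces_majorant_def Ces_kernel_integrand_def by measurable
    have "(\<integral>\<^sup>+t\<in>{0<..<real (Suc n)}. Ces_majorant a b f t \<partial>lborel)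
        \<le> ennreal (real (Suc n) powr a / a) * Ces_majorant 1 b f (real (Suc n))"
      using a by (intro nn_integral_Ces_majorant_le) auto
    also have "\<dots> < \<infinity>"
      using Ces_majorant_one_finite[OF p b _ f, of "real (Suc n)"] by (simp add: ennreal_mult_less_top)
    finally show "(\<integral>\<^sup>+t\<in>{0<..<real (Suc n)}. Ces_majorant a b f t \<partial>lborel) \<noteq> \<infinity>"
      by simp
  qed
  then have "AE t in lborel. \<forall>n. Ces_majorant a b f t * indicator {0<..<real (Suc n)} t \<noteq> \<infinity>"
    by (simp add: AE_all_countable)
  then show ?thesis
  proof eventually_elim
    case (elim t)
    show ?case
    proof
      assume "0 < t"
      moreover obtain n :: nat where "t < real n"
        using reals_Archimedean2 by blast
      ultimately show "Ces_majorant a b f t \<noteq> \<infinity>"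
        using elim[rule_format, of n] by simp
    qed
  qed
qed

section \<open>Fubini\<close>

lemma integral_of_real_mult_kernel:
  fixes f :: "real \<Rightarrow> complex"
  shows "complex_of_real c * (\<integral>r. f r * complex_of_real (g r) \<partial>M)
       = (\<integral>r. f r * complex_of_real (c * g r) \<partial>M)"
  by (simp add: mult_ac flip: integral_mult_right_zero)

lemma integral_Ces_kernel_integrand:
  "(\<integral>s. Ces_kernel_integrand a b t r s \<partial>lborel) = enn2real (Ces_kernel a b t r)"
  unfolding Ces_kernel_eq_integrand
  by (rule integral_eq_nn_integral) (auto simp: Ces_kernel_integrand_def)

definition Ces_Ces_star_integrand ::
    "real \<Rightarrow> real \<Rightarrow> real \<Rightarrow> (real \<Rightarrow> complex) \<Rightarrow> real \<Rightarrow> real \<Rightarrow> complex" where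
  "Ces_Ces_star_integrand a b t f s r = (if 0 < s \<and> s < t \<and> s < r then
       complex_of_real ((t - s) powr (a - 1) * ((r - s) powr (b - 1) / r powr b)) * f r else 0)"

lemma Ces_Ces_star_integrand_eq:
  "Ces_Ces_star_integrand a b t f s r
     = complex_of_real (Ces_kernel_integrand a b t r s) * (complex_of_real (r powr (- b)) * f r)"
  unfolding Ces_Ces_star_integrand_def Ces_kernel_integrand_def by (auto simp: powr_minus_divide)

lemma measurable_Ces_Ces_star_integrand [measurable]:
  fixes f :: "real \<Rightarrow> complex"
  assumes [measurable]: "f \<in> borel_measurable lborel"
  shows "(\<lambda>(s, r). Ces_Ces_star_integrand a b t f s r) \<in> borel_measurable (lborel \<Otimes>\<^sub>M lborel)"
  unfolding Ces_Ces_star_integrand_def by measurable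

lemma Ces_Ces_star_eq_double_integral:
  fixes f :: "real \<Rightarrow> complex"
  shows "Ces a (Ces_star b f) t
       = complex_of_real (a * b / t powr a) * (\<integral>s. \<integral>r. Ces_Ces_star_integrand a b t f s r \<partial>lborel \<partial>lborel)"
proof -
  have "indicator {0<..<t} s *\<^sub>R (complex_of_real ((t - s) powr (a - 1)) * Ces_star b f s)
      = complex_of_real b * (\<integral>r. Ces_Ces_star_integrand a b t f s r \<partial>lborel)" for s
  proof (cases "s \<in> {0<..<t}")
    case True
    have "indicator {0<..<t} s *\<^sub>R (complex_of_real ((t - s) powr (a - 1)) * Ces_star b f s)
        = complex_of_real b * (complex_of_real ((t - s) powr (a - 1)) * (\<integral>r. indicator {s<..} r
            *\<^sub>R (complex_of_real ((r - s) powr (b - 1) / r powr b) * f r) \<partial>lborel))"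
      using True by (simp add: Ces_star_def set_lebesgue_integral_def mult_ac)
    also have "\<dots> = complex_of_real b * (\<integral>r. complex_of_real ((t - s) powr (a - 1)) * (indicator {s<..} r
            *\<^sub>R (complex_of_real ((r - s) powr (b - 1) / r powr b) * f r)) \<partial>lborel)"
      by (simp only: integral_mult_right_zero)
    also have "\<dots> = complex_of_real b * (\<integral>r. Ces_Ces_star_integrand a b t f s r \<partial>lborel)"
      using True by (intro arg_cong2[where f = "(*)"] Bochner_Integration.integral_cong refl)
        (auto simp: Ces_Ces_star_integrand_def indicator_def)
    finally show ?thesis .
  qed (auto simp: Ces_Ces_star_integrand_def)
  then show ?thesis
    unfolding Ces_def set_lebesgue_integral_def by simp
qed

lemma integrable_Ces_Ces_star_integrand:
  fixes f :: "real \<Rightarrow> complex"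
  assumes [measurable]: "f \<in> borel_measurable lborel" and "Ces_majorant a b f t \<noteq> \<infinity>"
  shows "integrable (lborel \<Otimes>\<^sub>M lborel) (\<lambda>(s, r). Ces_Ces_star_integrand a b t f s r)"
proof (rule integrableI_bounded)
  have "(\<integral>\<^sup>+x. ennreal (norm (case x of (s, r) \<Rightarrow> Ces_Ces_star_integrand a b t f s r)) \<partial>(lborel \<Otimes>\<^sub>M lborel))
      = (\<integral>\<^sup>+r. \<integral>\<^sup>+s. ennreal (norm (Ces_Ces_star_integrand a b t f s r)) \<partial>lborel \<partial>lborel)"
    by (subst lborel_pair.nn_integral_snd[symmetric]) (simp_all add: case_prod_beta)
  also have "\<dots> = Ces_majorant a b f t"
    unfolding Ces_majorant_def Ces_Ces_star_integrand_eq
    by (intro nn_integral_cong) (simp add: norm_mult Ces_kernel_integrand_nonneg mult_ac)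
  finally show "(\<integral>\<^sup>+x. ennreal (norm (case x of (s, r) \<Rightarrow> Ces_Ces_star_integrand a b t f s r))
                  \<partial>(lborel \<Otimes>\<^sub>M lborel)) < \<infinity>"
    using assms(2) by (simp add: less_top)
qed simp

lemma integral_Ces_Ces_star_integrand:
  "(\<integral>s. Ces_Ces_star_integrand a b t f s r \<partial>lborel)
     = f r * complex_of_real (r powr (- b) * enn2real (Ces_kernel a b t r))"
  by (simp add: Ces_Ces_star_integrand_eq integral_Ces_kernel_integrand mult_ac)

lemma Ces_Ces_star_eq_kernel:
  fixes f :: "real \<Rightarrow> complex"
  assumes [measurable]: "f \<in> borel_measurable lborel" and "Ces_majorant a b f t \<noteq> \<infinity>"
  shows "Ces a (Ces_star b f) t = (\<integral>r. f r * complex_of_real (Ces_comp_kernel a b t r) \<partial>lborel)"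
    and "integrable lborel (\<lambda>r. f r * complex_of_real (Ces_comp_kernel a b t r))"
proof -
  note int = integrable_Ces_Ces_star_integrand[OF assms]
  have "(\<integral>s. \<integral>r. Ces_Ces_star_integrand a b t f s r \<partial>lborel \<partial>lborel)
      = (\<integral>r. f r * complex_of_real (r powr (- b) * enn2real (Ces_kernel a b t r)) \<partial>lborel)"
    using lborel_pair.Fubini_integral[OF int] by (simp add: integral_Ces_Ces_star_integrand)
  then show "Ces a (Ces_star b f) t = (\<integral>r. f r * complex_of_real (Ces_comp_kernel a b t r) \<partial>lborel)"
    unfolding Ces_Ces_star_eq_double_integral Ces_comp_kernel_def
    by (simp only: integral_of_real_mult_kernel)
  have "integrable lborel (\<lambda>r. f r * complex_of_real (r powr (- b) * enn2real (Ces_kernel a b t r)))"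
    using lborel_pair.integrable_snd[OF int] by (simp add: integral_Ces_Ces_star_integrand)
  from integrable_mult_right[OF this, of "complex_of_real (a * b / t powr a)"]
  show "integrable lborel (\<lambda>r. f r * complex_of_real (Ces_comp_kernel a b t r))"
    by (simp add: Ces_comp_kernel_def mult_ac)
qed

definition Ces_star_kernel_integrand :: "real \<Rightarrow> real \<Rightarrow> real \<Rightarrow> real \<Rightarrow> real \<Rightarrow> real" where
  "Ces_star_kernel_integrand a b t r s = (if t < s \<and> r < s then
     (s - t) powr (b - 1) / s powr b * (1 / s powr a) * (s - r) powr (a - 1) else 0)"

lemma Ces_star_kernel_integrand_nonneg: "Ces_star_kernel_integrand a b t r s \<ge> 0"
  unfolding Ces_star_kernel_integrand_def by auto

lemma Ces_star_kernel_eq_integrand: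
  "Ces_star_kernel a b t r = (\<integral>\<^sup>+s. ennreal (Ces_star_kernel_integrand a b t r s) \<partial>lborel)"
  unfolding Ces_star_kernel_def Ces_star_kernel_integrand_def
  by (intro nn_integral_cong) (auto simp: indicator_def)

lemma integral_Ces_star_kernel_integrand:
  "(\<integral>s. Ces_star_kernel_integrand a b t r s \<partial>lborel) = enn2real (Ces_star_kernel a b t r)"
  unfolding Ces_star_kernel_eq_integrand
  by (rule integral_eq_nn_integral) (auto simp: Ces_star_kernel_integrand_def)

definition Ces_star_Ces_integrand ::
    "real \<Rightarrow> real \<Rightarrow> real \<Rightarrow> (real \<Rightarrow> complex) \<Rightarrow> real \<Rightarrow> real \<Rightarrow> complex" where
  "Ces_star_Ces_integrand a b t f s r = (if t < s \<and> 0 < r \<and> r < s then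
     complex_of_real ((s - t) powr (b - 1) / s powr b * (1 / s powr a) * (s - r) powr (a - 1)) * f r
   else 0)"

lemma Ces_star_Ces_integrand_eq:
  "Ces_star_Ces_integrand a b t f s r
     = complex_of_real (indicator {0<..} r * Ces_star_kernel_integrand a b t r s) * f r"
  unfolding Ces_star_Ces_integrand_def Ces_star_kernel_integrand_def by (auto simp: indicator_def)

lemma measurable_Ces_star_Ces_integrand [measurable]:
  fixes f :: "real \<Rightarrow> complex"
  assumes [measurable]: "f \<in> borel_measurable lborel"
  shows "(\<lambda>(s, r). Ces_star_Ces_integrand a b t f s r) \<in> borel_measurable (lborel \<Otimes>\<^sub>M lborel)"
  unfolding Ces_star_Ces_integrand_def by measurable

lemma Ces_star_Ces_eq_double_integral:
  fixes f :: "real \<Rightarrow> complex"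
  shows "Ces_star b (Ces a f) t
       = complex_of_real (a * b) * (\<integral>s. \<integral>r. Ces_star_Ces_integrand a b t f s r \<partial>lborel \<partial>lborel)"
proof -
  have "indicator {t<..} s *\<^sub>R (complex_of_real ((s - t) powr (b - 1) / s powr b) * Ces a f s)
      = complex_of_real a * (\<integral>r. Ces_star_Ces_integrand a b t f s r \<partial>lborel)" for s
  proof (cases "s \<in> {t<..}")
    case True
    define X where "X = (s - t) powr (b - 1) / s powr b * (1 / s powr a)"
    have "indicator {t<..} s *\<^sub>R (complex_of_real ((s - t) powr (b - 1) / s powr b) * Ces a f s)
        = complex_of_real a * (complex_of_real X * (\<integral>r. indicator {0<..<s} r
            *\<^sub>R (complex_of_real ((s - r) powr (a - 1)) * f r) \<partial>lborel))"
      using True by (simp add: Ces_def set_lebesgue_integral_def X_def mult_ac)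
    also have "\<dots> = complex_of_real a * (\<integral>r. complex_of_real X * (indicator {0<..<s} r
            *\<^sub>R (complex_of_real ((s - r) powr (a - 1)) * f r)) \<partial>lborel)"
      by (simp only: integral_mult_right_zero)
    also have "\<dots> = complex_of_real a * (\<integral>r. Ces_star_Ces_integrand a b t f s r \<partial>lborel)"
      using True by (intro arg_cong2[where f = "(*)"] Bochner_Integration.integral_cong refl)
        (auto simp: Ces_star_Ces_integrand_def indicator_def X_def)
    finally show ?thesis .
  qed (auto simp: Ces_star_Ces_integrand_def)
  then show ?thesis
    unfolding Ces_star_def set_lebesgue_integral_def by simp
qed

lemma integral_Ces_star_Ces_integrand:
  assumes "t > 0"
  shows "(\<integral>s. Ces_star_Ces_integrand a b t f s r \<partial>lborel)
       = f r * complex_of_real (t powr (- a) * (r powr (- b) * enn2real (Ces_kernel a b t r)))"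
proof (cases "r > 0")
  case True
  then have "(\<integral>s. Ces_star_Ces_integrand a b t f s r \<partial>lborel)
      = complex_of_real (enn2real (Ces_star_kernel a b t r)) * f r"
    by (simp add: Ces_star_Ces_integrand_eq integral_Ces_star_kernel_integrand)
  then show ?thesis
    using assms True by (simp add: Ces_star_kernel_eq enn2real_mult mult_ac)
qed (auto simp: Ces_star_Ces_integrand_def Ces_kernel_nonpos)

lemma integrable_Ces_star_Ces_integrand:
  fixes f :: "real \<Rightarrow> complex"
  assumes [measurable]: "f \<in> borel_measurable lborel"
    and fin: "Ces_majorant a b f t \<noteq> \<infinity>" and t: "t > 0"
  shows "integrable (lborel \<Otimes>\<^sub>M lborel) (\<lambda>(s, r). Ces_star_Ces_integrand a b t f s r)"
proof (rule integrableI_bounded)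
  have "(\<integral>\<^sup>+s. ennreal (norm (Ces_star_Ces_integrand a b t f s r)) \<partial>lborel)
      = ennreal (t powr (- a)) * (ennreal (norm (f r) * r powr (- b)) * Ces_kernel a b t r)" for r
  proof (cases "r > 0")
    case True
    have "(\<integral>\<^sup>+s. ennreal (norm (Ces_star_Ces_integrand a b t f s r)) \<partial>lborel)
        = (\<integral>\<^sup>+s. ennreal (norm (f r)) * ennreal (Ces_star_kernel_integrand a b t r s) \<partial>lborel)"
      using True by (intro nn_integral_cong)
        (simp add: Ces_star_Ces_integrand_eq norm_mult Ces_star_kernel_integrand_nonneg ennreal_mult mult_ac)
    also have "\<dots> = ennreal (norm (f r)) * Ces_star_kernel a b t r"
      unfolding Ces_star_kernel_eq_integrand
      by (rule nn_integral_cmult) (simp add: Ces_star_kernel_integrand_def)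
    finally show ?thesis
      using t True by (simp add: Ces_star_kernel_eq ennreal_mult mult_ac)
  qed (auto simp: Ces_star_Ces_integrand_def Ces_kernel_nonpos)
  then have "(\<integral>\<^sup>+x. ennreal (norm (case x of (s, r) \<Rightarrow> Ces_star_Ces_integrand a b t f s r))
               \<partial>(lborel \<Otimes>\<^sub>M lborel))
      = ennreal (t powr (- a)) * Ces_majorant a b f t"
    unfolding Ces_majorant_eq
    by (subst lborel_pair.nn_integral_snd[symmetric])
       (auto simp: case_prod_beta Ces_kernel_eq_integrand Ces_kernel_integrand_def
             intro!: nn_integral_cmult)
  then show "(\<integral>\<^sup>+x. ennreal (norm (case x of (s, r) \<Rightarrow> Ces_star_Ces_integrand a b t f s r))
               \<partial>(lborel \<Otimes>\<^sub>M lborel)) < \<infinity>"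
    using fin by (simp add: less_top ennreal_mult_less_top)
qed simp

lemma Ces_star_Ces_eq_kernel:
  fixes f :: "real \<Rightarrow> complex"
  assumes [measurable]: "f \<in> borel_measurable lborel"
    and "Ces_majorant a b f t \<noteq> \<infinity>" and t: "t > 0"
  shows "Ces_star b (Ces a f) t = (\<integral>r. f r * complex_of_real (Ces_comp_kernel a b t r) \<partial>lborel)"
proof -
  note int = integrable_Ces_star_Ces_integrand[OF assms]
  have "(\<integral>s. \<integral>r. Ces_star_Ces_integrand a b t f s r \<partial>lborel \<partial>lborel)
      = (\<integral>r. f r * complex_of_real (t powr (- a) * (r powr (- b) * enn2real (Ces_kernel a b t r))) \<partial>lborel)"
    using lborel_pair.Fubini_integral[OF int] by (simp add: integral_Ces_star_Ces_integrand[OF t])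
  then show ?thesis
    unfolding Ces_star_Ces_eq_double_integral integral_of_real_mult_kernel
    by (simp add: Ces_comp_kernel_def powr_minus divide_inverse mult_ac)
qed

lemma Ces_Ces_star_commute:
  fixes f :: "real \<Rightarrow> complex"
  assumes "f \<in> borel_measurable lborel" and "Ces_majorant a b f t \<noteq> \<infinity>" and "t > 0"
  shows "Ces_star b (Ces a f) t = Ces a (Ces_star b f) t"
  using Ces_star_Ces_eq_kernel[OF assms] Ces_Ces_star_eq_kernel(1)[OF assms(1,2)] by simp

section \<open>Evaluation of the compositions\<close>

lemma integral_split_at:
  fixes f :: "real \<Rightarrow> complex" and K k\<^sub>1 k\<^sub>2 :: "real \<Rightarrow> real"
  assumes int: "integrable lborel (\<lambda>r. f r * complex_of_real (K r))" and "t > 0"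
    and "\<And>r. r \<le> 0 \<Longrightarrow> K r = 0"
    and "\<And>r. r \<in> {0<..<t} \<Longrightarrow> K r = k\<^sub>1 r" and "\<And>r. r \<in> {t<..} \<Longrightarrow> K r = k\<^sub>2 r"
  shows "(\<integral>r. f r * complex_of_real (K r) \<partial>lborel)
       = (LINT r:{0<..<t}|lborel. f r * complex_of_real (k\<^sub>1 r))
         + (LINT r:{t<..}|lborel. f r * complex_of_real (k\<^sub>2 r))"
proof -
  define G where "G r = f r * complex_of_real (K r)" for r
  have [measurable]: "G \<in> borel_measurable lborel"
    using int unfolding G_def by (rule borel_measurable_integrable)
  have "(\<integral>r. G r \<partial>lborel) = (\<integral>r. indicator {0<..<t} r *\<^sub>R G r + indicator {t<..} r *\<^sub>R G r \<partial>lborel)"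
  proof (rule integral_cong_AE)
    show "AE r in lborel. G r = indicator {0<..<t} r *\<^sub>R G r + indicator {t<..} r *\<^sub>R G r"
      using AE_lborel_singleton[of t] by eventually_elim (auto simp: G_def indicator_def assms(3))
  qed simp_all
  also have "\<dots> = (\<integral>r. indicator {0<..<t} r *\<^sub>R G r \<partial>lborel) + (\<integral>r. indicator {t<..} r *\<^sub>R G r \<partial>lborel)"
    using int unfolding G_def by (intro Bochner_Integration.integral_add integrable_mult_indicator) auto
  also have "\<dots> = (LINT r:{0<..<t}|lborel. f r * complex_of_real (k\<^sub>1 r))
                 + (LINT r:{t<..}|lborel. f r * complex_of_real (k\<^sub>2 r))"
    unfolding set_lebesgue_integral_def[symmetric] G_def
    by (intro arg_cong2[where f = "(+)"] set_lebesgue_integral_cong) (auto simp: assms(4,5))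
  finally show ?thesis
    by (simp add: G_def)
qed

lemma set_integral_of_real_mult:
  fixes f :: "real \<Rightarrow> complex"
  shows "(LINT r:A|M. f r * complex_of_real (c * g r)) = complex_of_real c * (LINT r:A|M. f r * complex_of_real (g r))"
  by (simp add: mult.left_commute flip: set_integral_mult_right)

lemma Ces_one_eq:
  assumes "t > 0"
  shows "Ces 1 f t = (LINT r:{0<..<t}|lborel. f r * complex_of_real (1 / t))"
proof -
  have "(LINT r:{0<..<t}|lborel. f r * complex_of_real (1 / t))
      = (LINT r:{0<..<t}|lborel. complex_of_real (1 / t) * (complex_of_real ((t - r) powr (1 - 1)) * f r))"
    by (rule set_lebesgue_integral_cong) auto
  then show ?thesis
    unfolding Ces_def using assms by simp
qed

lemma Ces_star_one_eq:
  assumes "t > 0"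
  shows "Ces_star 1 f t = (LINT r:{t<..}|lborel. f r * complex_of_real (1 / r))"
  unfolding Ces_star_def using assms
  by (simp, intro set_lebesgue_integral_cong) auto

lemma divide_mult_powr_succ:
  fixes Q R c :: real
  assumes "Q > 0" and "R > 0"
  shows "1 / Q * (Q / R) powr (1 + c) = Q powr c / R powr (c + 1)"
  using assms by (simp add: powr_divide powr_add field_simps)

lemma Ces_Ces_star_hyp2F1:
  fixes f :: "real \<Rightarrow> complex"
  assumes "a > 0" and "b > 0" and "f \<in> borel_measurable lborel" and "Ces_majorant a b f t \<noteq> \<infinity>"
    and "t > 0"
  shows "Ces a (Ces_star b f) t =
      complex_of_real a * (LINT r:{0<..<t}|lborel. f r *
         complex_of_real (1 / (t - r) * ((t - r) / t) powr (a + b) * hyp2F1 (a + b) b (b + 1) (r / t)))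
    + complex_of_real b * (LINT r:{t<..}|lborel. f r *
         complex_of_real (1 / (r - t) * ((r - t) / r) powr (a + b) * hyp2F1 (a + b) a (a + 1) (t / r)))"
  unfolding Ces_Ces_star_eq_kernel(1)[OF assms(3,4)] set_integral_of_real_mult[symmetric]
  using assms
  by (intro integral_split_at Ces_Ces_star_eq_kernel(2)[OF assms(3,4)])
     (auto simp: Ces_comp_kernel_nonpos Ces_comp_kernel_below Ces_comp_kernel_above)

lemma Ces_one_Ces_star:
  fixes f :: "real \<Rightarrow> complex"
  assumes "b > 0" and "f \<in> borel_measurable lborel" and "Ces_majorant 1 b f t \<noteq> \<infinity>" and "t > 0"
  shows "Ces 1 (Ces_star b f) t = Ces 1 f t + complex_of_real b * (LINT r:{t<..}|lborel. f r *
      complex_of_real ((r - t) powr b / r powr (b + 1) * hyp2F1 (b + 1) 1 2 (t / r)))"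
proof -
  have "Ces_comp_kernel 1 b t r = b * ((r - t) powr b / r powr (b + 1) * hyp2F1 (b + 1) 1 2 (t / r))"
    if "t < r" for r
  proof -
    have "Ces_comp_kernel 1 b t r
        = b * (1 / (r - t) * ((r - t) / r) powr (1 + b) * hyp2F1 (1 + b) 1 (1 + 1) (t / r))"
      using assms that by (intro Ces_comp_kernel_above) auto
    also have "\<dots> = b * ((r - t) powr b / r powr (b + 1) * hyp2F1 (b + 1) 1 2 (t / r))"
      using assms that by (subst divide_mult_powr_succ) (auto simp: add.commute)
    finally show ?thesis .
  qed
  then show ?thesis
    unfolding Ces_Ces_star_eq_kernel(1)[OF assms(2,3)] set_integral_of_real_mult[symmetric]
      Ces_one_eq[OF assms(4), of f]
    using assms
    by (intro integral_split_at Ces_Ces_star_eq_kernel(2)[OF assms(2,3)])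
       (auto simp: Ces_comp_kernel_nonpos Ces_comp_kernel_one_below)
qed

lemma Ces_Ces_star_one:
  fixes f :: "real \<Rightarrow> complex"
  assumes "a > 0" and "f \<in> borel_measurable lborel" and "Ces_majorant a 1 f t \<noteq> \<infinity>" and "t > 0"
  shows "Ces a (Ces_star 1 f) t = complex_of_real a * (LINT r:{0<..<t}|lborel. f r *
      complex_of_real ((t - r) powr a / t powr (a + 1) * hyp2F1 (a + 1) 1 2 (r / t))) + Ces_star 1 f t"
proof -
  have "Ces_comp_kernel a 1 t r = a * ((t - r) powr a / t powr (a + 1) * hyp2F1 (a + 1) 1 2 (r / t))"
    if "0 < r" "r < t" for r
  proof -
    have "Ces_comp_kernel a 1 t r
        = a * (1 / (t - r) * ((t - r) / t) powr (a + 1) * hyp2F1 (a + 1) 1 (1 + 1) (r / t))"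
      using assms that by (intro Ces_comp_kernel_below) auto
    also have "\<dots> = a * ((t - r) powr a / t powr (a + 1) * hyp2F1 (a + 1) 1 2 (r / t))"
      using assms that by (simp only: divide_mult_powr_succ add.commute[of a 1] one_add_one)
    finally show ?thesis .
  qed
  then show ?thesis
    unfolding Ces_Ces_star_eq_kernel(1)[OF assms(2,3)] set_integral_of_real_mult[symmetric]
      Ces_star_one_eq[OF assms(4)]
    using assms
    by (intro integral_split_at Ces_Ces_star_eq_kernel(2)[OF assms(2,3)])
       (auto simp: Ces_comp_kernel_nonpos Ces_comp_kernel_one_above)
qed

lemma Ces_one_Ces_star_one:
  fixes f :: "real \<Rightarrow> complex"
  assumes "f \<in> borel_measurable lborel" and "Ces_majorant 1 1 f t \<noteq> \<infinity>" and "t > 0"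
  shows "Ces 1 (Ces_star 1 f) t = Ces 1 f t + Ces_star 1 f t"
  unfolding Ces_Ces_star_eq_kernel(1)[OF assms(1,2)] Ces_one_eq[OF assms(3), of f]
    Ces_star_one_eq[OF assms(3)]
  using assms
  by (intro integral_split_at Ces_Ces_star_eq_kernel(2)[OF assms(1,2)])
     (auto simp: Ces_comp_kernel_nonpos Ces_comp_kernel_one_below Ces_comp_kernel_one_above)

theorem theorem3p12:
  fixes p \<alpha> \<beta> :: real and f :: "real \<Rightarrow> complex"
  assumes "p > 1" and "\<alpha> > 0" and "\<beta> > 0" and "Lp_pos p f"
  shows
    "(AE t in lborel. t > 0 \<longrightarrow> Ces \<alpha> (Ces_star \<beta> f) t = Ces_star \<beta> (Ces \<alpha> f) t)
   \<and> (AE t in lborel. t > 0 \<longrightarrow>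
        Ces \<alpha> (Ces_star \<beta> f) t =
          complex_of_real \<alpha> * (LINT r:{0<..<t}|lborel. f r *
             complex_of_real (1 / (t - r) * ((t - r) / t) powr (\<alpha> + \<beta>)
               * hyp2F1 (\<alpha> + \<beta>) \<beta> (\<beta> + 1) (r / t)))
        + complex_of_real \<beta> * (LINT r:{t<..}|lborel. f r *
             complex_of_real (1 / (r - t) * ((r - t) / r) powr (\<alpha> + \<beta>)
               * hyp2F1 (\<alpha> + \<beta>) \<alpha> (\<alpha> + 1) (t / r))))
   \<and> (AE t in lborel. t > 0 \<longrightarrow>
        Ces 1 (Ces_star \<beta> f) t =
          Ces 1 f t + complex_of_real \<beta> * (LINT r:{t<..}|lborel. f r *
             complex_of_real ((r - t) powr \<beta> / r powr (\<beta> + 1)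
               * hyp2F1 (\<beta> + 1) 1 2 (t / r))))
   \<and> (AE t in lborel. t > 0 \<longrightarrow>
        Ces \<alpha> (Ces_star 1 f) t =
          complex_of_real \<alpha> * (LINT r:{0<..<t}|lborel. f r *
             complex_of_real ((t - r) powr \<alpha> / t powr (\<alpha> + 1)
               * hyp2F1 (\<alpha> + 1) 1 2 (r / t)))
          + Ces_star 1 f t)
   \<and> (AE t in lborel. t > 0 \<longrightarrow>
        Ces 1 (Ces_star 1 f) t = Ces 1 f t + Ces_star 1 f t
        \<and> Ces 1 f t + Ces_star 1 f t = Ces_star 1 (Ces 1 f) t)"
proof -
  have f: "f \<in> borel_measurable lborel"
    using assms(4) by (simp add: Lp_pos_def)
  have AE: "AE t in lborel. 0 < t \<longrightarrow> Ces_majorant \<alpha> \<beta> f t \<noteq> \<infinity> \<and> Ces_majorant 1 \<beta> f t \<noteq> \<infinity>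
          \<and> Ces_majorant \<alpha> 1 f t \<noteq> \<infinity> \<and> Ces_majorant 1 1 f t \<noteq> \<infinity>"
    using AE_Ces_majorant_finite[OF assms(1) assms(2,3) assms(4)]
      AE_Ces_majorant_finite[OF assms(1) zero_less_one assms(3) assms(4)]
      AE_Ces_majorant_finite[OF assms(1) assms(2) zero_less_one assms(4)]
      AE_Ces_majorant_finite[OF assms(1) zero_less_one zero_less_one assms(4)]
    by eventually_elim blast
  show ?thesis
    apply (intro conjI)
    subgoal
      using AE by eventually_elim (simp add: Ces_Ces_star_commute[OF f])
    subgoal
      using AE by eventually_elim (simp add: Ces_Ces_star_hyp2F1[OF assms(2,3) f])
    subgoal
      using AE by eventually_elim (simp add: Ces_one_Ces_star[OF assms(3) f])
    subgoal
      using AE by eventually_elim (simp add: Ces_Ces_star_one[OF assms(2) f])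
    subgoal
      using AE by eventually_elim (simp add: Ces_Ces_star_commute[OF f] Ces_one_Ces_star_one[OF f])
    done
qed

end
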